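(* Consider a partially observed Markov decision process whose latent state at time $t$ is a vector $\mathbf{s}_t=(s_{1,t},\dots,s_{d,t})$, with observations $o_t$, actions $a_t$, rewards $r_t$ and discounted cumulative reward $R_t=\sum_{t'\ge t}\gamma^{t'-t}r_{t'}$, generated according to the causal graph described in the context. Assume that the graphical representation corresponding to this environment model is Markov and faithful to the distribution of the measured data. Then for every state dimension $s_{i,t}$ of $\mathbf{s}_t$: (1) $s_{i,t}\in s^{ar}_t$ iff $s_{i,t}\not\perp\!\!\!\perp R_t\mid a_{t-1:t},s^r_{t-1}$ and $s_{i,t}\not\perp\!\!\!\perp a_{t-1}\mid \mathbf{s}_{t-1}$; (2) $s_{i,t}\in s^{\bar a r}_t$ iff $s_{i,t}\not\perp\!\!\!\perp R_t\mid a_{t-1:t},s^r_{t-1}$ and $s_{i,t}\perp\!\!\!\perp a_{t-1}\mid \mathbf{s}_{t-1}$; (3) $s_{i,t}\in s^{a\bar r}_t$ iff $s_{i,t}\perp\!\!\!\perp R_t\mid a_{t-1:t},s^r_{t-1}$ and $s_{i,t}\not\perp\!\!\!\perp a_{t-1}\mid \mathbf{s}_{t-1}$; (4) $s_{i,t}\in s^{\bar a\bar r}_t$ iff $s_{i,t}\perp\!\!\!\perp R_t\mid a_{t-1:t},s^r_{t-1}$ and $s_{i,t}\perp\!\!\!\perp a_{t-1}\mid \mathbf{s}_{t-1}$.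
   Context: The latent state is partitioned into four blocks $\mathbf{s}_t=(s^{ar}_t,s^{\bar a r}_t,s^{a\bar r}_t,s^{\bar a\bar r}_t)$ according to the causal graph over time: (i) $s^{ar}_t$: dimensions with an incoming edge from $a_{t-1}$ and a directed path to $r_t$; (ii) $s^{\bar a r}_t$: no incoming edge from $a_{t-1}$ but a directed path to $r_t$; (iii) $s^{a\bar r}_t$: an incoming edge from $a_{t-1}$ and no directed path to $r_t$; (iv) $s^{\bar a\bar r}_t$: neither. Write $s^r_t:=(s^{ar}_t,s^{\bar a r}_t)$, $s^{\bar r}_t:=(s^{a\bar r}_t,s^{\bar a\bar r}_t)$. The graph has the following edges (and no others among these variables): $a_{t-1}\to s^{ar}_t$ and $a_{t-1}\to s^{a\bar r}_t$; $s^r_{t-1}\to s^{ar}_t$ and $s^r_{t-1}\to s^{\bar a r}_t$; $\mathbf{s}_{t-1}\to s^{a\bar r}_t$ and $\mathbf{s}_{t-1}\to s^{\bar a\bar r}_t$; $\mathbf{s}_t\to o_t$; $s^r_t\to r_t$; and possibly $s^r_t\to a_t$. There are no instantaneous causal effects among latent state variables; actions do not directly affect observations. $\gamma\in[0,1]$ is the discount factor and $a_{t-1:t}=(a_{t-1},a_t)$. "Markov" means every d-separation in the graph implies the corresponding conditional independence; "faithful" means there are no conditional independences other than those implied by the Markov condition. *)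

theory Defs
  imports Main
begin

text \<open>S i t is the state dimension s_{i,t},
  A t the action a_t, Obs t the observation o_t, Rw t the reward r_t and
  Ret t the discounted cumulative reward R_t = sum over t' >= t of gamma^(t'-t) r_{t'}.\<close>
datatype 'd node = S 'd nat | A nat | Obs nat | Rw nat | Ret nat

text \<open>The four blocks: AR = s^{ar}, NAR = s^{(not a) r}, ANR = s^{a (not r)},
  NANR = s^{(not a)(not r)}.\<close>
datatype block = AR | NAR | ANR | NANR

definition isR :: "block \<Rightarrow> bool" where
  "isR b \<longleftrightarrow> b = AR \<or> b = NAR"

definition isA :: "block \<Rightarrow> bool" where
  "isA b \<longleftrightarrow> b = AR \<or> b = ANR"

text \<open>Edge relation of the causal graph, given the block assignment blk of the
  state dimensions and the set pa of reward-relevant dimensions that are parents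
  of the action (the optional edges s^r_t -> a_t).\<close>
fun edge :: "('d \<Rightarrow> block) \<Rightarrow> ('d \<Rightarrow> bool) \<Rightarrow> 'd node \<Rightarrow> 'd node \<Rightarrow> bool" where
  "edge blk pa (A t) (S i t') \<longleftrightarrow> t' = Suc t \<and> isA (blk i)"
| "edge blk pa (S j t) (S i t') \<longleftrightarrow> t' = Suc t \<and>
      ((isR (blk j) \<and> isR (blk i)) \<or> \<not> isR (blk i))"
| "edge blk pa (S i t) (Obs t') \<longleftrightarrow> t' = t"
| "edge blk pa (S i t) (Rw t') \<longleftrightarrow> t' = t \<and> isR (blk i)"
| "edge blk pa (S i t) (A t') \<longleftrightarrow> t' = t \<and> pa i"
| "edge blk pa (Rw t') (Ret t) \<longleftrightarrow> t \<le> t'"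
| "edge blk pa _ _ \<longleftrightarrow> False"

definition adj :: "('v \<Rightarrow> 'v \<Rightarrow> bool) \<Rightarrow> 'v \<Rightarrow> 'v \<Rightarrow> bool" where
  "adj E u v \<longleftrightarrow> E u v \<or> E v u"

definition d_connecting :: "('v \<Rightarrow> 'v \<Rightarrow> bool) \<Rightarrow> 'v set \<Rightarrow> 'v list \<Rightarrow> 'v \<Rightarrow> 'v \<Rightarrow> bool" where
  "d_connecting E Z p x y \<longleftrightarrow>
     p \<noteq> [] \<and> hd p = x \<and> last p = y \<and> distinct p \<and>
     (\<forall>k. Suc k < length p \<longrightarrow> adj E (p ! k) (p ! Suc k)) \<and>
     (\<forall>k. 0 < k \<and> Suc k < length p \<longrightarrow>
        (if E (p ! (k - 1)) (p ! k) \<and> E (p ! Suc k) (p ! k)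
         then (\<exists>w\<in>Z. E\<^sup>*\<^sup>* (p ! k) w)
         else p ! k \<notin> Z))"

definition dsep :: "('v \<Rightarrow> 'v \<Rightarrow> bool) \<Rightarrow> 'v set \<Rightarrow> 'v set \<Rightarrow> 'v set \<Rightarrow> bool" where
  "dsep E X Y Z \<longleftrightarrow> \<not> (\<exists>x\<in>X. \<exists>y\<in>Y. \<exists>p. d_connecting E Z p x y)"

text \<open>indep X Y Z stands for "X is independent of Y given Z" in the distribution
  of the data.\<close>
definition markov :: "('v \<Rightarrow> 'v \<Rightarrow> bool) \<Rightarrow> ('v set \<Rightarrow> 'v set \<Rightarrow> 'v set \<Rightarrow> bool) \<Rightarrow> bool" where
  "markov E indep \<longleftrightarrow> (\<forall>X Y Z. X \<inter> Y = {} \<and> X \<inter> Z = {} \<and> Y \<inter> Z = {} \<longrightarrow>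
      dsep E X Y Z \<longrightarrow> indep X Y Z)"

definition faithful :: "('v \<Rightarrow> 'v \<Rightarrow> bool) \<Rightarrow> ('v set \<Rightarrow> 'v set \<Rightarrow> 'v set \<Rightarrow> bool) \<Rightarrow> bool" where
  "faithful E indep \<longleftrightarrow> (\<forall>X Y Z. X \<inter> Y = {} \<and> X \<inter> Z = {} \<and> Y \<inter> Z = {} \<longrightarrow>
      indep X Y Z \<longrightarrow> dsep E X Y Z)"

end

(*
  Markov and faithfulness turn each independence statement into a d-separation
  in the unrolled graph, so two d-separations have to be decided.

  If s_{i,t} is reward-relevant, s_{i,t} -> r_t -> R_t is open.  Otherwise no
  path is open: the reward-relevant states from time t on, the rewards r_{t'}
  with t' >= t and R_t have parents outside this part only in the conditioning
  set a_{t-1}, a_t, s^r_{t-1}, where a path entering along such an edge is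
  blocked; and the path never enters this part against an edge, since it only
  moves against edges to nodes up to time t.

  If s_{i,t} is a child of a_{t-1}, that edge is open.  Otherwise an open path
  must leave s_{i,t} along an out-edge, all other parents being conditioned on;
  as no descendant of s_{i,t} is conditioned on, it meets no open collider and
  cannot turn back to a_{t-1}.
*)
theory Submission imports Defs begin

lemma markov_faithful_indep_iff_dsep:
  assumes "markov E indep" "faithful E indep"
    and "X \<inter> Y = {}" "X \<inter> Z = {}" "Y \<inter> Z = {}"
  shows "indep X Y Z \<longleftrightarrow> dsep E X Y Z"
  using assms unfolding markov_def faithful_def by blast

lemma d_connecting_not_dsep:
  assumes "d_connecting E Z p x y" "x \<in> X" "y \<in> Y"
  shows "\<not> dsep E X Y Z"
  using assms unfolding dsep_def by blast

lemma d_connecting_edge: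
  assumes "adj E x y" "x \<noteq> y"
  shows "d_connecting E Z [x, y] x y"
  using assms unfolding d_connecting_def by (auto simp: less_Suc_eq)

lemma d_connecting_chain:
  assumes "E x v" "E v y" "\<not> E y v" "v \<notin> Z" "distinct [x, v, y]"
  shows "d_connecting E Z [x, v, y] x y"
  using assms unfolding d_connecting_def adj_def by (auto simp: less_Suc_eq)

lemma d_connecting_invariant:
  assumes dc: "d_connecting E Z p x y" and "x \<noteq> y"
    and base: "\<And>v. adj E x v \<Longrightarrow> P x v"
    and step: "\<And>u v w. P u v \<Longrightarrow> adj E u v \<Longrightarrow> adj E v w \<Longrightarrow>
        (if E u v \<and> E w v then \<exists>z\<in>Z. E\<^sup>*\<^sup>* v z else v \<notin> Z) \<Longrightarrow> P v w"
  shows "\<exists>u. P u y"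
proof -
  from dc have ne: "p \<noteq> []" and hd: "hd p = x" and lst: "last p = y"
    and adjs: "\<And>k. Suc k < length p \<Longrightarrow> adj E (p ! k) (p ! Suc k)"
    and open_at: "\<And>k. 0 < k \<Longrightarrow> Suc k < length p \<Longrightarrow>
        (if E (p ! (k - 1)) (p ! k) \<and> E (p ! Suc k) (p ! k)
         then \<exists>z\<in>Z. E\<^sup>*\<^sup>* (p ! k) z else p ! k \<notin> Z)"
    unfolding d_connecting_def by blast+
  have inv: "P (p ! k) (p ! Suc k)" if "Suc k < length p" for k
    using that
  proof (induction k)
    case 0
    then show ?case using base adjs[of 0] hd ne by (metis hd_conv_nth)
  next
    case (Suc k)
    then show ?case using step[OF Suc.IH] adjs open_at[of "Suc k"] by simp
  qed
  obtain m where m: "length p = Suc (Suc m)"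
    using ne hd lst \<open>x \<noteq> y\<close> by (cases p; cases "tl p") auto
  have "p ! Suc m = y" using lst ne m by (simp add: last_conv_nth)
  then show ?thesis using inv[of m] m by auto
qed

definition not_before :: "nat \<Rightarrow> 'd node \<Rightarrow> bool" where
  "not_before t v \<longleftrightarrow> (case v of S j t' \<Rightarrow> t \<le> t' | A t' \<Rightarrow> t \<le> t' | _ \<Rightarrow> True)"

lemma not_before_descendant:
  assumes "(edge blk pa)\<^sup>*\<^sup>* u v" "not_before t u"
  shows "not_before t v"
  using assms
proof (induction rule: rtranclp_induct)
  case (step v w)
  then show ?case by (cases v; cases w) (auto simp: not_before_def)
qed

definition reward_future :: "('d \<Rightarrow> block) \<Rightarrow> nat \<Rightarrow> 'd node \<Rightarrow> bool" where
  "reward_future blk t v \<longleftrightarrow>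
     (\<exists>j t'. v = S j t' \<and> isR (blk j) \<and> t \<le> t') \<or> (\<exists>t'. v = Rw t' \<and> t \<le> t') \<or> v = Ret t"

text \<open>A node from time t + 1 on is no ancestor of the conditioning set, so a path
  that reaches it along an edge cannot continue against an edge.\<close>
lemma reward_future_avoided_step:
  assumes "\<And>j. pa j \<Longrightarrow> isR (blk j)" and "1 \<le> t"
    and "\<not> reward_future blk t u" "\<not> reward_future blk t v"
    and "edge blk pa v u \<longrightarrow> \<not> not_before (Suc t) v"
    and "adj (edge blk pa) u v" "adj (edge blk pa) v w"
    and "if edge blk pa u v \<and> edge blk pa w v then \<not> not_before (Suc t) v
       else v \<notin> {A (t - 1), A t} \<union> {S j (t - 1) | j. isR (blk j)}"
  shows "\<not> reward_future blk t w \<and> (edge blk pa w v \<longrightarrow> \<not> not_before (Suc t) w)"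
  using assms
  by (cases u; cases v; cases w)
    (auto simp: adj_def reward_future_def not_before_def split: if_splits)

lemma dsep_state_return:
  assumes pa_r: "\<And>j. pa j \<Longrightarrow> isR (blk j)" and t1: "1 \<le> t" and nR: "\<not> isR (blk i)"
  shows "dsep (edge blk pa) {S i t} {Ret t} ({A (t - 1), A t} \<union> {S j (t - 1) | j. isR (blk j)})"
proof -
  let ?E = "edge blk pa" and ?Z = "{A (t - 1), A t} \<union> {S j (t - 1) | j. isR (blk j)}"
  let ?P = "\<lambda>u v. \<not> reward_future blk t u \<and> \<not> reward_future blk t v \<and>
    (?E v u \<longrightarrow> \<not> not_before (Suc t) v)"
  have False if dc: "d_connecting ?E ?Z p (S i t) (Ret t)" for p
  proof -
    have "\<exists>u. ?P u (Ret t)"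
    proof (rule d_connecting_invariant[OF dc])
      fix v assume "adj ?E (S i t) v"
      then show "?P (S i t) v"
        using pa_r nR by (cases v) (auto simp: adj_def reward_future_def not_before_def)
    next
      fix u v w
      assume "?P u v" and uv: "adj ?E u v" and vw: "adj ?E v w"
        and open_at: "if ?E u v \<and> ?E w v then \<exists>z\<in>?Z. ?E\<^sup>*\<^sup>* v z else v \<notin> ?Z"
      then have u: "\<not> reward_future blk t u" and v: "\<not> reward_future blk t v"
        and vu: "?E v u \<longrightarrow> \<not> not_before (Suc t) v"
        by auto
      have "\<not> not_before (Suc t) v" if "z \<in> ?Z" "?E\<^sup>*\<^sup>* v z" for z
        using that t1 not_before_descendant[of blk pa v z "Suc t"] by (auto simp: not_before_def)
      then have "if ?E u v \<and> ?E w v then \<not> not_before (Suc t) v else v \<notin> ?Z"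
        using open_at by (auto split: if_splits)
      from reward_future_avoided_step[OF pa_r t1 u v vu uv vw this] v show "?P v w" by simp
    qed simp
    then show False by (simp add: reward_future_def)
  qed
  then show ?thesis unfolding dsep_def by auto
qed

lemma dsep_state_return_iff:
  assumes "\<And>j. pa j \<Longrightarrow> isR (blk j)" and "1 \<le> t"
  shows "dsep (edge blk pa) {S i t} {Ret t} ({A (t - 1), A t} \<union> {S j (t - 1) | j. isR (blk j)})
    \<longleftrightarrow> \<not> isR (blk i)"
proof
  assume sep: "dsep (edge blk pa) {S i t} {Ret t} ({A (t - 1), A t} \<union> {S j (t - 1) | j. isR (blk j)})"
  show "\<not> isR (blk i)"
  proof
    assume "isR (blk i)"
    then have "d_connecting (edge blk pa) ({A (t - 1), A t} \<union> {S j (t - 1) | j. isR (blk j)})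
        [S i t, Rw t, Ret t] (S i t) (Ret t)"
      by (intro d_connecting_chain) auto
    from d_connecting_not_dsep[OF this] sep show False by simp
  qed
qed (rule dsep_state_return[OF assms])

lemma dsep_state_prev_action:
  fixes blk :: "'d \<Rightarrow> block"
  assumes t1: "1 \<le> t" and nA: "\<not> isA (blk i)"
  shows "dsep (edge blk pa) {S i t} {A (t - 1)} {S j (t - 1) | j. True}"
proof -
  let ?E = "edge blk pa" and ?Z = "{S j (t - 1) | j :: 'd. True}"
  \<comment> \<open>the first case is a step to a conditioned parent, where the path is blocked\<close>
  let ?P = "\<lambda>u v. (v \<in> ?Z \<and> \<not> ?E u v) \<or> (?E u v \<and> not_before t v)"
  have Z_early: "\<not> not_before t z" if "z \<in> ?Z" for z
    using that t1 by (auto simp: not_before_def)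
  have False if dc: "d_connecting ?E ?Z p (S i t) (A (t - 1))" for p
  proof -
    have "\<exists>u. ?P u (A (t - 1))"
    proof (rule d_connecting_invariant[OF dc])
      fix v assume "adj ?E (S i t) v"
      then show "?P (S i t) v" using nA by (cases v) (auto simp: adj_def not_before_def)
    next
      fix u v w
      assume P: "?P u v" and "adj ?E v w"
        and open_at: "if ?E u v \<and> ?E w v then \<exists>z\<in>?Z. ?E\<^sup>*\<^sup>* v z else v \<notin> ?Z"
      show "?P v w"
      proof (cases "v \<in> ?Z \<and> \<not> ?E u v")
        case True
        then show ?thesis using open_at by simp
      next
        case False
        with P have uv: "?E u v" and v: "not_before t v" by auto
        have "\<not> ?E w v"
        proof
          assume "?E w v"
          then obtain z where "z \<in> ?Z" "?E\<^sup>*\<^sup>* v z" using open_at uv by auto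
          then show False using Z_early not_before_descendant[OF _ v] by blast
        qed
        then have "?E v w" using \<open>adj ?E v w\<close> by (simp add: adj_def)
        then show ?thesis using not_before_descendant[OF r_into_rtranclp v] by blast
      qed
    qed simp
    then show False using t1 by (auto simp: not_before_def)
  qed
  then show ?thesis unfolding dsep_def by blast
qed

lemma dsep_state_prev_action_iff:
  assumes "1 \<le> t"
  shows "dsep (edge blk pa) {S i t} {A (t - 1)} {S j (t - 1) | j. True} \<longleftrightarrow> \<not> isA (blk i)"
proof
  assume sep: "dsep (edge blk pa) {S i t} {A (t - 1)} {S j (t - 1) | j. True}"
  show "\<not> isA (blk i)"
  proof
    assume "isA (blk i)"
    then have "d_connecting (edge blk pa) {S j (t - 1) | j. True} [S i t, A (t - 1)] (S i t) (A (t - 1))"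
      using assms by (intro d_connecting_edge) (auto simp: adj_def)
    from d_connecting_not_dsep[OF this] sep show False by simp
  qed
qed (rule dsep_state_prev_action[OF assms])

theorem proposition3:
  fixes blk :: "'d::finite \<Rightarrow> block" and pa :: "'d \<Rightarrow> bool"
    and indep :: "'d node set \<Rightarrow> 'd node set \<Rightarrow> 'd node set \<Rightarrow> bool"
    and i :: 'd and t :: nat
  assumes pa_r: "\<And>j. pa j \<Longrightarrow> isR (blk j)"
    and mk: "markov (edge blk pa) indep"
    and fa: "faithful (edge blk pa) indep"
    and t1: "1 \<le> t"
  defines "ZR \<equiv> {A (t - 1), A t} \<union> {S j (t - 1) | j. isR (blk j)}"
    and "ZA \<equiv> {S j (t - 1) | j. True}"
  shows "(blk i = AR \<longleftrightarrow>
            \<not> indep {S i t} {Ret t} ZR \<and> \<not> indep {S i t} {A (t - 1)} ZA)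
       \<and> (blk i = NAR \<longleftrightarrow>
            \<not> indep {S i t} {Ret t} ZR \<and> indep {S i t} {A (t - 1)} ZA)
       \<and> (blk i = ANR \<longleftrightarrow>
            indep {S i t} {Ret t} ZR \<and> \<not> indep {S i t} {A (t - 1)} ZA)
       \<and> (blk i = NANR \<longleftrightarrow>
            indep {S i t} {Ret t} ZR \<and> indep {S i t} {A (t - 1)} ZA)"
proof -
  have "indep {S i t} {Ret t} ZR \<longleftrightarrow> dsep (edge blk pa) {S i t} {Ret t} ZR"
    by (rule markov_faithful_indep_iff_dsep[OF mk fa]) (use t1 in \<open>auto simp: ZR_def\<close>)
  also have "\<dots> \<longleftrightarrow> \<not> isR (blk i)"
    unfolding ZR_def by (rule dsep_state_return_iff[OF pa_r t1])
  finally have R: "indep {S i t} {Ret t} ZR \<longleftrightarrow> \<not> isR (blk i)" .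
  have "indep {S i t} {A (t - 1)} ZA \<longleftrightarrow> dsep (edge blk pa) {S i t} {A (t - 1)} ZA"
    by (rule markov_faithful_indep_iff_dsep[OF mk fa]) (use t1 in \<open>auto simp: ZA_def\<close>)
  also have "\<dots> \<longleftrightarrow> \<not> isA (blk i)"
    unfolding ZA_def by (rule dsep_state_prev_action_iff[OF t1])
  finally have A: "indep {S i t} {A (t - 1)} ZA \<longleftrightarrow> \<not> isA (blk i)" .
  show ?thesis unfolding R A by (cases "blk i") (simp_all add: isR_def isA_def)
qed

end
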